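(* Let $B=(b_{ij})$ be an $n\times n$ skew-symmetrizable integer matrix and let $D=\operatorname{diag}(d_1,\dots,d_n)$ be a skew-symmetrizer of $B$ (positive integers $d_i$ with $DB$ skew-symmetric), and put $\mathbf d=(d_1,\dots,d_n)$. Then for every $k\in\{1,\dots,n\}$ the weighted quivers $\mu_k(Q_B,\mathbf d)$ and $(Q_{\mu_k(B)},\mathbf d)$ are isomorphic (as weighted quivers on the vertex set $\{1,\dots,n\}$ with weight tuple $\mathbf d$).
   Context: A weighted quiver is a pair $(Q,\mathbf d)$ where $Q$ is a finite loop-free quiver on vertex set $Q_0$ (multiple arrows and 2-cycles allowed) and $\mathbf d=(d_i)_{i\in Q_0}$ is a tuple of positive integers. For $B$ and $D$ as in the claim, $Q_B$ is the quiver on vertex set $\{1,\dots,n\}$ having, for every pair $i,j$ with $c_{ij}\ge 0$, exactly $c_{ij}$ arrows from $j$ to $i$, where $c_{ij}=\gcd(d_i,d_j)b_{ij}/d_j$ (the matrix $(c_{ij})$ is a skew-symmetric integer matrix). Matrix mutation: $\mu_k(B)=B'$ with $b'_{ij}=-b_{ij}$ if $i=k$ or $j=k$, and $b'_{ij}=b_{ij}+\frac{b_{ik}|b_{kj}|+|b_{ik}|b_{kj}}{2}$ otherwise. Mutation of a weighted quiver $(Q,\mathbf d)$ at a vertex $k$: $\mu_k(Q,\mathbf d)$ has the same vertex set and weight tuple, and its quiver is obtained by (1) for each pair of arrows $j\to k$, $k\to i$, adding $\frac{\gcd(d_i,d_j)d_k}{\gcd(d_i,d_k)\gcd(d_k,d_j)}$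 new arrows from $j$ to $i$; (2) reversing every arrow incident to $k$; (3) choosing a maximal collection of pairwise disjoint oriented 2-cycles and deleting its arrows. *)

theory Defs
  imports Main
begin

text \<open>Vertices are 1..n. A matrix is a function nat => nat => int (entries outside
{1..n} are ignored). A quiver on {1..n} is given by its arrow multiplicities:
arr x y = number of arrows from x to y.\<close>

type_synonym quiver = "nat \<Rightarrow> nat \<Rightarrow> nat"

definition skew_symmetrizer :: "nat \<Rightarrow> (nat \<Rightarrow> nat \<Rightarrow> int) \<Rightarrow> (nat \<Rightarrow> nat) \<Rightarrow> bool" where
  "skew_symmetrizer n B d \<longleftrightarrow>
     (\<forall>i\<in>{1..n}. d i > 0) \<and>
     (\<forall>i\<in>{1..n}. \<forall>j\<in>{1..n}. int (d i) * B i j = - (int (d j) * B j i))"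

definition cmat :: "(nat \<Rightarrow> nat \<Rightarrow> int) \<Rightarrow> (nat \<Rightarrow> nat) \<Rightarrow> nat \<Rightarrow> nat \<Rightarrow> int" where
  "cmat B d i j = int (gcd (d i) (d j)) * B i j div int (d j)"

definition quiver_of :: "nat \<Rightarrow> (nat \<Rightarrow> nat \<Rightarrow> int) \<Rightarrow> (nat \<Rightarrow> nat) \<Rightarrow> quiver" where
  "quiver_of n B d = (\<lambda>x y. if x \<in> {1..n} \<and> y \<in> {1..n} \<and> cmat B d y x \<ge> 0
                              then nat (cmat B d y x) else 0)"

definition matrix_mutation :: "nat \<Rightarrow> (nat \<Rightarrow> nat \<Rightarrow> int) \<Rightarrow> (nat \<Rightarrow> nat \<Rightarrow> int)" where
  "matrix_mutation k B = (\<lambda>i j. if i = k \<or> j = k then - B i j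
      else B i j + (B i k * \<bar>B k j\<bar> + \<bar>B i k\<bar> * B k j) div 2)"

definition mut_weight :: "(nat \<Rightarrow> nat) \<Rightarrow> nat \<Rightarrow> nat \<Rightarrow> nat \<Rightarrow> nat" where
  "mut_weight d i j k = gcd (d i) (d j) * d k div (gcd (d i) (d k) * gcd (d k) (d j))"

definition mut_step1 :: "nat \<Rightarrow> (nat \<Rightarrow> nat) \<Rightarrow> nat \<Rightarrow> quiver \<Rightarrow> quiver" where
  "mut_step1 n d k Q = (\<lambda>j i. Q j i +
      (if j \<in> {1..n} \<and> i \<in> {1..n} \<and> j \<noteq> i then Q j k * Q k i * mut_weight d i j k else 0))"

definition mut_step2 :: "nat \<Rightarrow> quiver \<Rightarrow> quiver" where
  "mut_step2 k Q = (\<lambda>x y. if x = k \<or> y = k then Q y x else Q x y)"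

text \<open>Step (3): deleting a maximal collection of pairwise disjoint oriented 2-cycles
removes min(Q x y, Q y x) arrows in each direction between x and y.\<close>
definition mut_step3 :: "quiver \<Rightarrow> quiver" where
  "mut_step3 Q = (\<lambda>x y. Q x y - min (Q x y) (Q y x))"

definition wquiver_mutation :: "nat \<Rightarrow> (nat \<Rightarrow> nat) \<Rightarrow> nat \<Rightarrow> quiver \<Rightarrow> quiver" where
  "wquiver_mutation n d k Q = mut_step3 (mut_step2 k (mut_step1 n d k Q))"

text \<open>Isomorphism of weighted quivers (Q1,d) and (Q2,d) on vertex set {1..n}:
a weight-preserving vertex bijection inducing a bijection on arrows, i.e. preserving
all arrow multiplicities.\<close>
definition wquiver_iso :: "nat \<Rightarrow> (nat \<Rightarrow> nat) \<Rightarrow> quiver \<Rightarrow> quiver \<Rightarrow> bool" where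
  "wquiver_iso n d Q1 Q2 \<longleftrightarrow>
     (\<exists>\<sigma>. bij_betw \<sigma> {1..n} {1..n} \<and> (\<forall>i\<in>{1..n}. d (\<sigma> i) = d i) \<and>
          (\<forall>i\<in>{1..n}. \<forall>j\<in>{1..n}. Q2 (\<sigma> i) (\<sigma> j) = Q1 i j))"

end

theory Submission
  imports Defs
begin

text \<open>The matrix c_ij = gcd(d_i,d_j) b_ij / d_j is skew-symmetric, has the same sign pattern
as B, and d_j c_ij = gcd(d_i,d_j) b_ij holds exactly. Hence mutating B at k changes c_ij
(for i, j \<noteq> k) by the weight gcd(d_i,d_j) d_k / (gcd(d_i,d_k) gcd(d_k,d_j)) times the ordinary
mutation term (c_ik |c_kj| + |c_ik| c_kj)/2, and this is exactly the net number of arrows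
that steps (1)-(3) of quiver mutation add between j and i. The identity map is therefore
an isomorphism.\<close>

lemma mutation_term_sgn:
  fixes a b :: int
  shows "(a * \<bar>b\<bar> + \<bar>a\<bar> * b) div 2 = (sgn a + sgn b) div 2 * (a * b)"
  by (cases a "0::int" rule: linorder_cases; cases b "0::int" rule: linorder_cases)
     (auto simp: mult_neg_neg abs_if)

lemma mutation_term_positive_parts:
  fixes a b :: int
  shows "(a * \<bar>b\<bar> + \<bar>a\<bar> * b) div 2 = max a 0 * max b 0 - max (- a) 0 * max (- b) 0"
  by (cases a "0::int" rule: linorder_cases; cases b "0::int" rule: linorder_cases)
     (auto simp: mult_neg_neg abs_if)

lemma gcd_mult_gcd_dvd: "gcd a c * gcd c b dvd gcd a b * (c::nat)"
proof -
  have "gcd a c * gcd c b dvd a * c" by (simp add: mult_dvd_mono)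
  moreover have "gcd a c * gcd c b dvd b * c"
    by (metis dvd_mult_right gcd_dvd1 gcd_dvd2 mult.commute mult_dvd_mono)
  ultimately have "gcd a c * gcd c b dvd gcd (a * c) (b * c)" by simp
  thus ?thesis by (simp add: gcd_mult_right ac_simps)
qed

lemma mut_weight_mult:
  "gcd (d i) (d k) * gcd (d k) (d j) * mut_weight d i j k = gcd (d i) (d j) * d k"
  unfolding mut_weight_def using gcd_mult_gcd_dvd[of "d i" "d k" "d j"] by simp

lemma mut_weight_commute: "mut_weight d i j k = mut_weight d j i k"
  unfolding mut_weight_def by (simp add: gcd.commute mult.commute)

lemma cmat_eqI:
  assumes "d j > 0" and "int (d j) * r = int (gcd (d i) (d j)) * B i j"
  shows "cmat B d i j = r"
  unfolding cmat_def using assms by (metis nonzero_mult_div_cancel_left of_nat_0_less_iff less_irrefl)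

lemma int_quiver_of:
  "x \<in> {1..n} \<Longrightarrow> y \<in> {1..n} \<Longrightarrow> int (quiver_of n B d x y) = max (cmat B d y x) 0"
  unfolding quiver_of_def by auto

lemma int_mut_step3: "int (mut_step3 Q x y) = max (int (Q x y) - int (Q y x)) 0"
  unfolding mut_step3_def by (simp add: of_nat_diff)

context
  fixes n :: nat and B :: "nat \<Rightarrow> nat \<Rightarrow> int" and d :: "nat \<Rightarrow> nat"
  assumes skew: "skew_symmetrizer n B d"
begin

lemma weight_pos: "i \<in> {1..n} \<Longrightarrow> d i > 0"
  using skew unfolding skew_symmetrizer_def by blast

lemma weight_mult_skew:
  "i \<in> {1..n} \<Longrightarrow> j \<in> {1..n} \<Longrightarrow> int (d i) * B i j = - (int (d j) * B j i)"
  using skew unfolding skew_symmetrizer_def by blast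

lemma weight_mult_cmat:
  assumes "i \<in> {1..n}" "j \<in> {1..n}"
  shows "int (d j) * cmat B d i j = int (gcd (d i) (d j)) * B i j"
proof -
  obtain u v where "u * int (d i) + v * int (d j) = gcd (int (d i)) (int (d j))"
    using bezout_int by blast
  then have "int (gcd (d i) (d j)) = u * int (d i) + v * int (d j)" by simp
  then have "int (gcd (d i) (d j)) * B i j = int (d j) * (v * B i j - u * B j i)"
    using weight_mult_skew[OF assms] by (simp add: algebra_simps)
  then have "int (d j) dvd int (gcd (d i) (d j)) * B i j" by simp
  then show ?thesis unfolding cmat_def by simp
qed

lemma cmat_skew:
  assumes i: "i \<in> {1..n}" and j: "j \<in> {1..n}"
  shows "cmat B d j i = - cmat B d i j"
proof -
  have "int (d i) * int (d j) * cmat B d j i = int (d j) * (int (gcd (d j) (d i)) * B j i)"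
    using weight_mult_cmat[OF j i] by (simp add: ac_simps)
  also have "\<dots> = - (int (gcd (d i) (d j)) * (int (d i) * B i j))"
    using weight_mult_skew[OF i j] by (simp add: gcd.commute ac_simps)
  also have "\<dots> = int (d i) * int (d j) * (- cmat B d i j)"
    using weight_mult_cmat[OF i j] by (simp add: algebra_simps)
  finally have "int (d i) * int (d j) * cmat B d j i = int (d i) * int (d j) * (- cmat B d i j)" .
  moreover have "int (d i) * int (d j) \<noteq> 0" using weight_pos[OF i] weight_pos[OF j] by simp
  ultimately show ?thesis by (metis mult_cancel_left)
qed

lemma sgn_cmat:
  assumes i: "i \<in> {1..n}" and j: "j \<in> {1..n}"
  shows "sgn (cmat B d i j) = sgn (B i j)"
proof -
  have "sgn (int (d j) * cmat B d i j) = sgn (int (gcd (d i) (d j)) * B i j)"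
    using weight_mult_cmat[OF i j] by simp
  moreover have "gcd (d i) (d j) > 0" using weight_pos[OF i] by simp
  ultimately show ?thesis using weight_pos[OF j] by (simp add: sgn_mult)
qed

text \<open>The weight of step (1) is exactly what turns paths through k in c into paths in B.\<close>
lemma cmat_path_product:
  assumes i: "i \<in> {1..n}" and j: "j \<in> {1..n}" and k: "k \<in> {1..n}"
  shows "int (d j) * int (mut_weight d i j k) * (cmat B d i k * cmat B d k j)
         = int (gcd (d i) (d j)) * (B i k * B k j)"
proof -
  let ?w = "int (mut_weight d i j k)"
  have "int (d k) * (int (d j) * ?w * (cmat B d i k * cmat B d k j))
        = (int (d k) * cmat B d i k) * (int (d j) * cmat B d k j) * ?w"
    by (simp add: ac_simps)
  also have "\<dots> = int (gcd (d i) (d k) * gcd (d k) (d j) * mut_weight d i j k) * (B i k * B k j)"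
    using weight_mult_cmat[OF i k] weight_mult_cmat[OF k j] by (simp add: ac_simps)
  also have "\<dots> = int (d k) * (int (gcd (d i) (d j)) * (B i k * B k j))"
    unfolding mut_weight_mult by (simp add: ac_simps)
  finally show ?thesis using weight_pos[OF k] by simp
qed

lemma cmat_matrix_mutation_incident:
  assumes "i \<in> {1..n}" "j \<in> {1..n}" "i = k \<or> j = k"
  shows "cmat (matrix_mutation k B) d i j = - cmat B d i j"
  using assms weight_pos weight_mult_cmat
  by (intro cmat_eqI) (auto simp: matrix_mutation_def)

lemma cmat_matrix_mutation:
  assumes i: "i \<in> {1..n}" and j: "j \<in> {1..n}" and k: "k \<in> {1..n}" and "i \<noteq> k" "j \<noteq> k"
  shows "cmat (matrix_mutation k B) d i j = cmat B d i j + int (mut_weight d i j k) *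
           ((cmat B d i k * \<bar>cmat B d k j\<bar> + \<bar>cmat B d i k\<bar> * cmat B d k j) div 2)"
proof (rule cmat_eqI)
  show "d j > 0" using weight_pos[OF j] .
  let ?m = "(cmat B d i k * \<bar>cmat B d k j\<bar> + \<bar>cmat B d i k\<bar> * cmat B d k j) div 2"
  let ?s = "(sgn (B i k) + sgn (B k j)) div 2"
  have "int (d j) * (cmat B d i j + int (mut_weight d i j k) * ?m)
        = int (d j) * cmat B d i j
          + ?s * (int (d j) * int (mut_weight d i j k) * (cmat B d i k * cmat B d k j))"
    unfolding mutation_term_sgn sgn_cmat[OF i k] sgn_cmat[OF k j] by (simp add: algebra_simps)
  also have "\<dots> = int (gcd (d i) (d j)) * (B i j + ?s * (B i k * B k j))"
    unfolding weight_mult_cmat[OF i j] cmat_path_product[OF i j k] by (simp add: algebra_simps)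
  also have "\<dots> = int (gcd (d i) (d j)) * matrix_mutation k B i j"
    using assms by (simp add: matrix_mutation_def mutation_term_sgn)
  finally show "int (d j) * (cmat B d i j + int (mut_weight d i j k) * ?m)
                = int (gcd (d i) (d j)) * matrix_mutation k B i j" .
qed

lemma quiver_of_diff:
  assumes "x \<in> {1..n}" "y \<in> {1..n}"
  shows "int (quiver_of n B d x y) - int (quiver_of n B d y x) = cmat B d y x"
  using int_quiver_of[OF assms] int_quiver_of[OF assms(2,1)] cmat_skew[OF assms(2,1)] by simp

lemma quiver_of_diag: "x \<in> {1..n} \<Longrightarrow> quiver_of n B d x x = 0"
  using int_quiver_of[of x n x B d] cmat_skew[of x x] by simp

lemma mutated_quiver_diff:
  assumes x: "x \<in> {1..n}" and y: "y \<in> {1..n}" and k: "k \<in> {1..n}"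
  defines "Q' \<equiv> mut_step2 k (mut_step1 n d k (quiver_of n B d))"
  shows "int (Q' x y) - int (Q' y x) = cmat (matrix_mutation k B) d y x"
proof -
  let ?Q = "quiver_of n B d" and ?c = "cmat B d"
  have step1: "mut_step1 n d k ?Q a b
                = ?Q a b + (if a \<noteq> b then ?Q a k * ?Q k b * mut_weight d b a k else 0)"
    if "a \<in> {1..n}" "b \<in> {1..n}" for a b
    using that by (simp add: mut_step1_def)
  consider "x = k \<or> y = k" | "x \<noteq> k" "y \<noteq> k" "x = y" | "x \<noteq> k" "y \<noteq> k" "x \<noteq> y" by blast
  then show ?thesis
  proof cases
    case 1
    then have "Q' x y = ?Q y x" "Q' y x = ?Q x y"
      using step1[OF x y] step1[OF y x] quiver_of_diag[OF k] by (auto simp: Q'_def mut_step2_def)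
    then show ?thesis
      using quiver_of_diff[OF y x] cmat_skew[OF y x] cmat_matrix_mutation_incident[OF y x] 1 by auto
  next
    case 2
    then show ?thesis
      using cmat_matrix_mutation[OF x x k] cmat_skew[OF x x] cmat_skew[OF x k] by simp
  next
    case 3
    let ?w = "int (mut_weight d y x k)"
    have "int (Q' x y) - int (Q' y x) = ?c y x
            + ?w * (max (?c y k) 0 * max (?c k x) 0 - max (?c k y) 0 * max (?c x k) 0)"
      using 3 step1[OF x y] step1[OF y x] quiver_of_diff[OF x y]
        int_quiver_of[OF x k] int_quiver_of[OF k y] int_quiver_of[OF y k] int_quiver_of[OF k x]
      by (simp add: Q'_def mut_step2_def mut_weight_commute[of d x y] algebra_simps)
    also have "\<dots> = cmat (matrix_mutation k B) d y x"
      using 3 cmat_skew[OF y k] cmat_skew[OF k x]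
      by (simp add: cmat_matrix_mutation[OF y x k] mutation_term_positive_parts)
    finally show ?thesis .
  qed
qed

lemma wquiver_mutation_quiver_of:
  assumes "x \<in> {1..n}" "y \<in> {1..n}" "k \<in> {1..n}"
  shows "wquiver_mutation n d k (quiver_of n B d) x y = quiver_of n (matrix_mutation k B) d x y"
proof -
  have "int (wquiver_mutation n d k (quiver_of n B d) x y)
        = max (cmat (matrix_mutation k B) d y x) 0"
    using mutated_quiver_diff[OF assms] by (simp add: wquiver_mutation_def int_mut_step3)
  then show ?thesis using int_quiver_of[OF assms(1,2)] by (metis of_nat_eq_iff)
qed

end

theorem mainTheorem1:
  fixes n :: nat and B :: "nat \<Rightarrow> nat \<Rightarrow> int" and d :: "nat \<Rightarrow> nat" and k :: nat
  assumes "skew_symmetrizer n B d"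
    and "k \<in> {1..n}"
  shows "wquiver_iso n d (wquiver_mutation n d k (quiver_of n B d))
                         (quiver_of n (matrix_mutation k B) d)"
  unfolding wquiver_iso_def
  by (rule exI[of _ id]) (simp add: wquiver_mutation_quiver_of[OF assms(1) _ _ assms(2)])

end
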